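(* (1) For every gauge function $f$ there is an increasing $g\in\omega^\omega$ such that $\mathcal{I}_g\subseteq\mathcal{N}^f$. (2) For every increasing $g\in\omega^\omega$ there is a gauge function $f$ such that $\mathcal{N}^f\subseteq\mathcal{I}_g$.
   Context: $2^\omega$ carries the metric $d(x,y)=2^{-\min\{n:x(n)\neq y(n)\}}$ for $x\neq y$ and $d(x,x)=0$. A gauge function is a nondecreasing $f\colon[0,\infty)\to[0,\infty)$ with $f(0)=0$, $\lim_{x\to0}f(x)=0$; $\mathcal{H}^f(A)=\lim_{\delta\to0}\inf\{\sum_nf(\operatorname{diam}C_n):A\subseteq\bigcup_nC_n,\ \operatorname{diam}C_n\le\delta\}$ and $\mathcal{N}^f=\{A\subseteq2^\omega:\mathcal{H}^f(A)=0\}$. For $\sigma\in(2^{<\omega})^\omega$, $(\operatorname{ht}\sigma)(n)=|\sigma(n)|$ and $[\sigma]_\infty=\{x\in2^\omega:\exists^\infty n\ \sigma(n)\subseteq x\}$; for $g\in\omega^\omega$, $\mathcal{J}_g=\{A\subseteq2^\omega:\exists\sigma\in(2^{<\omega})^\omega\,(\operatorname{ht}\sigma=g\wedge A\subseteq[\sigma]_\infty)\}$. For $f,g\in\omega^\omega$, $f\ll g$ iff for every $k$, $f(n^k)\le g(n)$ for all but finitely many $n$. For increasing $f\in\omega^\omega$, the Yorioka ideal is $\mathcal{I}_f=\bigcup_{g\gg f}\mathcal{J}_g$. *)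

theory Defs
  imports "HOL-Analysis.Analysis"
begin

type_synonym cantor = "nat \<Rightarrow> bool"

definition cdist :: "cantor \<Rightarrow> cantor \<Rightarrow> real" where
  "cdist x y = (if x = y then 0 else (1/2) ^ (LEAST n. x n \<noteq> y n))"

definition cdiam :: "cantor set \<Rightarrow> real" where
  "cdiam C = (if C = {} then 0 else (SUP p\<in>C \<times> C. cdist (fst p) (snd p)))"

definition gauge :: "(real \<Rightarrow> real) \<Rightarrow> bool" where
  "gauge f \<longleftrightarrow> mono_on {0..} f \<and> (\<forall>x\<ge>0. f x \<ge> 0) \<and> f 0 = 0
      \<and> (f \<longlongrightarrow> 0) (at_right 0)"

definition hausdorff_delta :: "(real \<Rightarrow> real) \<Rightarrow> real \<Rightarrow> cantor set \<Rightarrow> ennreal" where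
  "hausdorff_delta f \<delta> A =
     (INF C \<in> {C :: nat \<Rightarrow> cantor set. A \<subseteq> (\<Union>n. C n) \<and> (\<forall>n. cdiam (C n) \<le> \<delta>)}.
        (\<Sum>n. ennreal (f (cdiam (C n)))))"

text \<open>The limit as delta -> 0+ of a quantity nonincreasing in delta is its supremum.\<close>
definition hausdorff :: "(real \<Rightarrow> real) \<Rightarrow> cantor set \<Rightarrow> ennreal" where
  "hausdorff f A = (SUP \<delta>\<in>{0<..}. hausdorff_delta f \<delta> A)"

definition null_f :: "(real \<Rightarrow> real) \<Rightarrow> cantor set set" where
  "null_f f = {A. hausdorff f A = 0}"

definition prefix_of :: "bool list \<Rightarrow> cantor \<Rightarrow> bool" where
  "prefix_of s x \<longleftrightarrow> (\<forall>i<length s. x i = s ! i)"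

definition inf_often_set :: "(nat \<Rightarrow> bool list) \<Rightarrow> cantor set" where
  "inf_often_set \<sigma> = {x. \<exists>\<^sub>\<infinity>n. prefix_of (\<sigma> n) x}"

definition J_ideal :: "(nat \<Rightarrow> nat) \<Rightarrow> cantor set set" where
  "J_ideal g = {A. \<exists>\<sigma>. (\<forall>n. length (\<sigma> n) = g n) \<and> A \<subseteq> inf_often_set \<sigma>}"

definition ll :: "(nat \<Rightarrow> nat) \<Rightarrow> (nat \<Rightarrow> nat) \<Rightarrow> bool" where
  "ll f g \<longleftrightarrow> (\<forall>k. \<forall>\<^sub>F n in sequentially. f (n ^ k) \<le> g n)"

definition yorioka :: "(nat \<Rightarrow> nat) \<Rightarrow> cantor set set" where
  "yorioka f = (\<Union>g\<in>{g. ll f g}. J_ideal g)"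

end

theory Submission
  imports Defs "HOL-Library.Nat_Bijection"
begin

text \<open>
  If \<open>f (2\<^sup>-\<^sup>g\<^sup>n) \<le> 2\<^sup>-\<^sup>n\<close> and \<open>h\<close> eventually dominates \<open>g\<close>, a set covered infinitely often by
  cylinders of lengths \<open>h n\<close> is covered, for every \<open>N\<close>, by the cylinders of index \<open>\<ge> N\<close>, whose
  \<open>f\<close>-weights sum to a tail of a convergent series; so it is \<open>f\<close>-null. Such a \<open>g\<close> exists for
  every gauge since \<open>f x \<rightarrow> 0\<close> as \<open>x \<rightarrow> 0\<close>.

  Conversely, for \<open>h n = g (n\<^sup>n)\<close> we have \<open>g \<lless> h\<close>; let the gauge give a set of diameter about
  \<open>2\<^sup>-\<^sup>m\<close> the weight \<open>3 / sqrt (1 + #{n. h n \<le> m})\<close>. If \<open>A\<close> is null, pick for every \<open>k\<close> a cover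
  of \<open>A\<close> of total weight \<open>< 1/(k+1)\<close>. Listing its sets of positive diameter by increasing
  diameter level, the \<open>j\<close>-th one has weight \<open>< 1/((j+1)(k+1))\<close>, which forces \<open>h (2\<langle>k,j\<rangle>)\<close> to be
  at most its level, so its points share a prefix of that length. Using these prefixes at the even
  indices \<open>2\<langle>k,j\<rangle>\<close>, and the odd indices for the sets of diameter 0 (singletons), every point of
  \<open>A\<close> extends infinitely many of them: \<open>A \<in> J\<^sub>h \<subseteq> I\<^sub>g\<close>.
\<close>

lemma cdist_nonneg: "0 \<le> cdist x y"
  by (simp add: cdist_def)

lemma cdist_le_1: "cdist x y \<le> 1"
  by (simp add: cdist_def power_le_one)

lemma cdist_pos: "x \<noteq> y \<Longrightarrow> 0 < cdist x y"
  by (simp add: cdist_def)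

lemma cdist_le_if_agree: "(\<And>i. i < m \<Longrightarrow> x i = y i) \<Longrightarrow> cdist x y \<le> (1/2) ^ m"
proof (cases "x = y")
  case False
  assume agree: "\<And>i. i < m \<Longrightarrow> x i = y i"
  obtain n where "x n \<noteq> y n"
    using False by blast
  then have "x (LEAST n. x n \<noteq> y n) \<noteq> y (LEAST n. x n \<noteq> y n)"
    by (rule LeastI)
  then have "m \<le> (LEAST n. x n \<noteq> y n)"
    using agree not_le by blast
  then show ?thesis
    using False by (simp add: cdist_def power_decreasing)
qed (simp add: cdist_def)

lemma cdist_le_cdiam: "x \<in> C \<Longrightarrow> y \<in> C \<Longrightarrow> cdist x y \<le> cdiam C"
  unfolding cdiam_def
  by (auto intro!: cSUP_upper2[where x = "(x, y)"] bdd_aboveI[where M = 1] simp: cdist_le_1)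

lemma cdiam_nonneg: "0 \<le> cdiam C"
proof (cases "C = {}")
  case False
  then obtain x where "x \<in> C" by blast
  then show ?thesis using cdist_le_cdiam[of x C x] cdist_nonneg[of x x] by linarith
qed (simp add: cdiam_def)

lemma cdiam_le_0_imp_eq: "cdiam C \<le> 0 \<Longrightarrow> x \<in> C \<Longrightarrow> y \<in> C \<Longrightarrow> x = y"
  using cdist_le_cdiam[of x C y] cdist_pos[of x y] by force

definition cyl :: "bool list \<Rightarrow> cantor set" where
  "cyl s = {x. prefix_of s x}"

lemma cdiam_cyl_le: "cdiam (cyl s) \<le> (1/2) ^ length s"
proof (cases "cyl s = {}")
  case False
  have "cdist (fst p) (snd p) \<le> (1/2) ^ length s" if "p \<in> cyl s \<times> cyl s" for p
    using that by (intro cdist_le_if_agree) (auto simp: cyl_def prefix_of_def)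
  then show ?thesis
    using False by (simp add: cdiam_def cSUP_least)
qed (simp add: cdiam_def)

definition dyadic_level :: "real \<Rightarrow> nat" where
  "dyadic_level x = (LEAST n. (1/2) ^ n \<le> x)"

lemma dyadic_level_le: "0 < x \<Longrightarrow> (1/2) ^ dyadic_level x \<le> x"
  unfolding dyadic_level_def
  by (rule LeastI_ex) (use real_arch_pow_inv[of x "1/2"] in \<open>auto intro: less_imp_le\<close>)

lemma dyadic_level_antimono: "0 < x \<Longrightarrow> x \<le> y \<Longrightarrow> dyadic_level y \<le> dyadic_level x"
  using dyadic_level_le[of x] unfolding dyadic_level_def by (intro Least_le) simp

lemma less_dyadic_level: "0 < x \<Longrightarrow> x < (1/2) ^ M \<Longrightarrow> M < dyadic_level x"
proof (rule ccontr)
  assume "0 < x" "x < (1/2) ^ M" "\<not> M < dyadic_level x"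
  then have "(1/2::real) ^ M \<le> (1/2) ^ dyadic_level x"
    by (intro power_decreasing) auto
  with dyadic_level_le[OF \<open>0 < x\<close>] \<open>x < (1/2) ^ M\<close> show False
    by simp
qed

lemma agree_below_dyadic_level:
  assumes "x \<in> C" "y \<in> C" "0 < cdiam C" "i < dyadic_level (cdiam C)"
  shows "x i = y i"
proof (rule ccontr)
  assume "x i \<noteq> y i"
  then have "x \<noteq> y" and "(LEAST n. x n \<noteq> y n) \<le> i"
    by (auto intro: Least_le)
  then have "cdist x y = (1/2) ^ (LEAST n. x n \<noteq> y n)"
    and "(LEAST n. x n \<noteq> y n) < dyadic_level (cdiam C)"
    using assms(4) by (auto simp: cdist_def)
  then have "\<not> cdist x y \<le> cdiam C"
    unfolding dyadic_level_def by (metis not_less_Least)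
  then show False
    using cdist_le_cdiam[OF assms(1,2)] by blast
qed

section \<open>Yorioka ideals consist of null sets\<close>

lemma gauge_nonneg: "gauge f \<Longrightarrow> 0 \<le> x \<Longrightarrow> 0 \<le> f x"
  by (simp add: gauge_def)

lemma gauge_mono: "gauge f \<Longrightarrow> 0 \<le> x \<Longrightarrow> x \<le> y \<Longrightarrow> f x \<le> f y"
  unfolding gauge_def by (auto intro: mono_onD)

lemma null_fI:
  assumes "\<And>\<delta> e. 0 < \<delta> \<Longrightarrow> 0 < e \<Longrightarrow> \<exists>C. A \<subseteq> (\<Union>n. C n) \<and> (\<forall>n. cdiam (C n) \<le> \<delta>)
             \<and> (\<Sum>n. ennreal (f (cdiam (C n)))) \<le> ennreal e"
  shows "A \<in> null_f f"
proof -
  have "hausdorff_delta f \<delta> A \<le> ennreal e" if "0 < \<delta>" "0 < e" for \<delta> e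
    using assms[OF that] unfolding hausdorff_delta_def by (auto intro: INF_lower2)
  then have "hausdorff_delta f \<delta> A = 0" if "0 < \<delta>" for \<delta>
    using that by (metis add_0 ennreal_le_epsilon le_zero_eq)
  then show ?thesis
    by (simp add: null_f_def hausdorff_def)
qed

lemma inf_often_set_subset_tail: "inf_often_set \<sigma> \<subseteq> (\<Union>i. cyl (\<sigma> (i + N)))"
proof
  fix x assume "x \<in> inf_often_set \<sigma>"
  then obtain m where "N \<le> m" "prefix_of (\<sigma> m) x"
    unfolding inf_often_set_def INFM_nat_le by blast
  then show "x \<in> (\<Union>i. cyl (\<sigma> (i + N)))"
    by (auto simp: cyl_def intro!: exI[of _ "m - N"])
qed

lemma J_ideal_subset_null_f:
  assumes f: "gauge f" and summable: "summable (\<lambda>n. f ((1/2) ^ h n))"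
    and h: "filterlim h at_top sequentially"
  shows "J_ideal h \<subseteq> null_f f"
proof
  fix A assume "A \<in> J_ideal h"
  then obtain \<sigma> where len: "\<And>n. length (\<sigma> n) = h n" and A: "A \<subseteq> inf_often_set \<sigma>"
    unfolding J_ideal_def by blast
  show "A \<in> null_f f"
  proof (rule null_fI)
    fix \<delta> e :: real assume "0 < \<delta>" "0 < e"
    obtain M where M: "(1/2::real) ^ M < \<delta>"
      using real_arch_pow_inv[of \<delta> "1/2"] \<open>0 < \<delta>\<close> by auto
    obtain N1 where N1: "\<And>n. N1 \<le> n \<Longrightarrow> M \<le> h n"
      using h unfolding filterlim_at_top eventually_sequentially by blast
    obtain N2 where N2: "\<And>n. N2 \<le> n \<Longrightarrow> norm (\<Sum>i. f ((1/2) ^ h (i + n))) < e"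
      using suminf_exist_split[OF \<open>0 < e\<close> summable] by blast
    define N where "N = max N1 N2"
    define C where "C i = cyl (\<sigma> (i + N))" for i
    have diam: "cdiam (C i) \<le> (1/2) ^ h (i + N)" for i
      using cdiam_cyl_le[of "\<sigma> (i + N)"] by (simp add: C_def len)
    have "cdiam (C i) \<le> \<delta>" for i
    proof -
      have "(1/2::real) ^ h (i + N) \<le> (1/2) ^ M"
        using N1[of "i + N"] by (intro power_decreasing) (auto simp: N_def)
      then show ?thesis
        using diam[of i] M by linarith
    qed
    moreover have "A \<subseteq> (\<Union>i. C i)"
      using A inf_often_set_subset_tail unfolding C_def by blast
    moreover have "(\<Sum>i. ennreal (f (cdiam (C i)))) \<le> ennreal e"
    proof -
      have "(\<Sum>i. ennreal (f (cdiam (C i)))) \<le> (\<Sum>i. ennreal (f ((1/2) ^ h (i + N))))"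
        using gauge_mono[OF f cdiam_nonneg diam] by (intro suminf_le ennreal_leI) auto
      also have "\<dots> = ennreal (\<Sum>i. f ((1/2) ^ h (i + N)))"
        using summable summable_iff_shift[where f = "\<lambda>n. f ((1/2) ^ h n)"]
        by (intro suminf_ennreal2 gauge_nonneg[OF f]) auto
      also have "\<dots> \<le> ennreal e"
        using N2[of N] by (intro ennreal_leI) (auto simp: N_def)
      finally show ?thesis .
    qed
    ultimately show "\<exists>C. A \<subseteq> (\<Union>n. C n) \<and> (\<forall>n. cdiam (C n) \<le> \<delta>)
             \<and> (\<Sum>n. ennreal (f (cdiam (C n)))) \<le> ennreal e"
      by blast
  qed
qed

lemma exists_strict_mono_ge: "\<exists>g::nat \<Rightarrow> nat. strict_mono g \<and> (\<forall>n. f n \<le> g n)"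
proof (intro exI conjI allI)
  show "strict_mono (\<lambda>n. (\<Sum>i\<le>n. f i) + n)"
    by (rule strict_mono_Suc_iff[THEN iffD2]) simp
  show "f n \<le> (\<Sum>i\<le>n. f i) + n" for n
    using member_le_sum[of n "{..n}" f] by simp
qed

lemma gauge_dyadic_modulus:
  assumes f: "gauge f"
  shows "\<exists>g. strict_mono g \<and> (\<forall>n. f ((1/2) ^ g n) \<le> (1/2) ^ n)"
proof -
  have "\<forall>n. \<exists>N. f ((1/2) ^ N) \<le> (1/2) ^ n"
  proof
    fix n
    have "(f \<longlongrightarrow> 0) (at_right 0)"
      using f by (simp add: gauge_def)
    then have "\<forall>\<^sub>F x in at_right 0. f x < (1/2) ^ n"
      by (rule order_tendstoD(2)) simp
    then obtain b where b: "0 < b" "\<And>y. 0 < y \<Longrightarrow> y < b \<Longrightarrow> f y < (1/2) ^ n"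
      unfolding eventually_at_right_field by blast
    obtain N where "(1/2::real) ^ N < b"
      using real_arch_pow_inv[of b "1/2"] b(1) by auto
    then have "f ((1/2) ^ N) < (1/2) ^ n"
      by (intro b(2)) simp_all
    then show "\<exists>N. f ((1/2) ^ N) \<le> (1/2) ^ n"
      by (blast intro: less_imp_le)
  qed
  then obtain N where N: "\<And>n. f ((1/2) ^ N n) \<le> (1/2) ^ n"
    using choice[OF \<open>\<forall>n. \<exists>N. _\<close>] by blast
  obtain g where g: "strict_mono g" "\<And>n. N n \<le> g n"
    using exists_strict_mono_ge[of N] by blast
  have "f ((1/2) ^ g n) \<le> f ((1/2) ^ N n)" for n
    using g(2)[of n] by (intro gauge_mono[OF f]) (auto intro: power_decreasing)
  then have "f ((1/2) ^ g n) \<le> (1/2) ^ n" for n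
    using N[of n] by (meson order_trans)
  with g(1) show ?thesis
    by blast
qed

lemma yorioka_subset_null_f:
  assumes f: "gauge f" and g: "strict_mono g" and modulus: "\<And>n. f ((1/2) ^ g n) \<le> (1/2) ^ n"
  shows "yorioka g \<subseteq> null_f f"
proof
  fix A assume "A \<in> yorioka g"
  then obtain h where "ll g h" and A: "A \<in> J_ideal h"
    unfolding yorioka_def by blast
  then have "\<forall>\<^sub>F n in sequentially. g (n ^ 1) \<le> h n"
    unfolding ll_def by blast
  then have g_le_h: "\<forall>\<^sub>F n in sequentially. g n \<le> h n"
    by simp
  have "\<forall>\<^sub>F n in sequentially. norm (f ((1/2) ^ h n)) \<le> (1/2) ^ n"
    using g_le_h
  proof eventually_elim
    case (elim n)
    have "f ((1/2) ^ h n) \<le> f ((1/2) ^ g n)"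
      using elim by (intro gauge_mono[OF f]) (auto intro: power_decreasing)
    then show ?case
      using modulus[of n] gauge_nonneg[OF f, of "(1/2) ^ h n"] by simp
  qed
  then have "summable (\<lambda>n. f ((1/2) ^ h n))"
    by (rule summable_comparison_test_ev) simp
  moreover have "filterlim h at_top sequentially"
    using filterlim_at_top_mono[OF filterlim_subseq[OF g] g_le_h] by simp
  ultimately show "A \<in> null_f f"
    using J_ideal_subset_null_f[OF f] A by blast
qed

section \<open>The counting gauge\<close>

definition level_count :: "(nat \<Rightarrow> nat) \<Rightarrow> nat \<Rightarrow> nat" where
  "level_count h m = card {n. h n \<le> m}"

definition count_weight :: "(nat \<Rightarrow> nat) \<Rightarrow> nat \<Rightarrow> real" where
  "count_weight h m = 3 / sqrt (real (level_count h m) + 1)"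

definition count_gauge :: "(nat \<Rightarrow> nat) \<Rightarrow> real \<Rightarrow> real" where
  "count_gauge h x = (if x \<le> 0 then 0 else count_weight h (dyadic_level x))"

lemma finite_le_level:
  fixes h :: "nat \<Rightarrow> nat"
  assumes "filterlim h at_top sequentially"
  shows "finite {n. h n \<le> m}"
proof -
  obtain N where N: "\<And>n. N \<le> n \<Longrightarrow> Suc m \<le> h n"
    using assms unfolding filterlim_at_top eventually_sequentially by blast
  have "n < N" if "h n \<le> m" for n
    using that N[of n] by (cases "N \<le> n") simp_all
  then have "{n. h n \<le> m} \<subseteq> {..<N}"
    by blast
  then show ?thesis
    using finite_subset by blast
qed

lemma level_count_mono:
  "filterlim h at_top sequentially \<Longrightarrow> m \<le> m' \<Longrightarrow> level_count h m \<le> level_count h m'"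
  unfolding level_count_def by (intro card_mono finite_le_level) auto

lemma le_level_count_at:
  assumes "mono h" "filterlim h at_top sequentially"
  shows "Suc n \<le> level_count h (h n)"
proof -
  have "{..n} \<subseteq> {i. h i \<le> h n}"
    using monoD[OF \<open>mono h\<close>] by blast
  then have "card {..n} \<le> card {i. h i \<le> h n}"
    by (rule card_mono[OF finite_le_level[OF assms(2)]])
  then show ?thesis
    by (simp add: level_count_def)
qed

lemma le_if_less_level_count:
  assumes "mono h" "filterlim h at_top sequentially" "p < level_count h m"
  shows "h p \<le> m"
proof (rule ccontr)
  assume "\<not> h p \<le> m"
  have "n < p" if "h n \<le> m" for n
  proof (rule ccontr)
    assume "\<not> n < p"
    then have "h p \<le> h n"
      using monoD[OF \<open>mono h\<close>] by simp
    with that \<open>\<not> h p \<le> m\<close> show False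
      by simp
  qed
  then have "{n. h n \<le> m} \<subseteq> {..<p}"
    by blast
  then have "level_count h m \<le> p"
    unfolding level_count_def using card_mono[OF finite_lessThan] by force
  with \<open>p < level_count h m\<close> show False
    by simp
qed

lemma count_weight_pos: "0 < count_weight h m"
  by (simp add: count_weight_def)

lemma count_weight_antimono:
  "filterlim h at_top sequentially \<Longrightarrow> antimono (count_weight h)"
  unfolding count_weight_def
  by (intro antimonoI divide_left_mono) (simp_all add: level_count_mono)

lemma count_weight_tendsto_0:
  assumes "mono h" "filterlim h at_top sequentially"
  shows "count_weight h \<longlonglongrightarrow> 0"
proof -
  have "Z \<le> level_count h m" if "h Z \<le> m" for Z m
    using le_level_count_at[OF assms, of Z] level_count_mono[OF assms(2) that] by linarith
  then have "filterlim (level_count h) at_top sequentially"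
    unfolding filterlim_at_top eventually_sequentially by blast
  then have "filterlim (\<lambda>m. real (level_count h m)) at_top sequentially"
    by (rule filterlim_compose[OF filterlim_real_sequentially])
  then have "filterlim (\<lambda>m. real (level_count h m) + 1) at_top sequentially"
    by (rule filterlim_at_top_mono) simp
  then have "filterlim (\<lambda>m. sqrt (real (level_count h m) + 1)) at_top sequentially"
    by (rule filterlim_compose[OF sqrt_at_top])
  then show ?thesis
    unfolding count_weight_def
    by (intro tendsto_divide_0[OF tendsto_const] filterlim_at_top_imp_at_infinity)
qed

lemma count_gauge_nonneg: "0 \<le> count_gauge h x"
  using count_weight_pos[of h] by (simp add: count_gauge_def less_imp_le)

lemma gauge_count_gauge:
  assumes h: "mono h" "filterlim h at_top sequentially"
  shows "gauge (count_gauge h)"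
proof -
  have "mono_on {0..} (count_gauge h)"
  proof (rule mono_onI)
    fix x y :: real assume "x \<in> {0..}" "x \<le> y"
    then show "count_gauge h x \<le> count_gauge h y"
      using count_weight_antimono[OF h(2)] dyadic_level_antimono[of x y]
      by (auto simp: count_gauge_def antimono_def less_imp_le[OF count_weight_pos])
  qed
  moreover have "(count_gauge h \<longlongrightarrow> 0) (at_right 0)"
  proof (rule order_tendstoI)
    fix e :: real assume "0 < e"
    then obtain M where M: "\<And>m. M \<le> m \<Longrightarrow> count_weight h m < e"
      using order_tendstoD(2)[OF count_weight_tendsto_0[OF h]]
      unfolding eventually_sequentially by blast
    have "count_gauge h y < e" if "0 < y" "y < (1/2) ^ M" for y
      using M[of "dyadic_level y"] less_dyadic_level[OF that] that(1)
      by (simp add: count_gauge_def)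
    then show "\<forall>\<^sub>F x in at_right 0. count_gauge h x < e"
      unfolding eventually_at_right_field by (intro exI[of _ "(1/2) ^ M"]) simp
  next
    fix e :: real assume "e < 0"
    then show "\<forall>\<^sub>F x in at_right 0. e < count_gauge h x"
      using count_gauge_nonneg[of h] by (intro always_eventually allI) (meson less_le_trans)
  qed
  moreover have "count_gauge h 0 = 0"
    by (simp add: count_gauge_def)
  ultimately show ?thesis
    unfolding gauge_def using count_gauge_nonneg by blast
qed

lemma two_prod_encode_le: "2 * prod_encode (a, b) \<le> (a + b + 2) ^ 2"
proof -
  have "2 * ((a + b) * Suc (a + b) div 2) \<le> (a + b) * Suc (a + b)"
    by simp
  then show ?thesis
    unfolding prod_encode_def triangle_def by (simp add: power2_eq_square algebra_simps)
qed

lemma two_prod_encode_less: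
  assumes "3 * real (k + j + 2) < 2 * sqrt (real R + 1)"
  shows "2 * prod_encode (k, j) < R"
proof -
  define X where "X = (k + j + 2) ^ 2"
  have "(3 * real (k + j + 2)) ^ 2 < (2 * sqrt (real R + 1)) ^ 2"
    using assms by (intro power_strict_mono) auto
  then have "9 * real X < 4 * (real R + 1)"
    unfolding X_def power_mult_distrib of_nat_power by simp
  moreover have "real (2 * prod_encode (k, j)) \<le> real X"
    unfolding X_def of_nat_le_iff by (rule two_prod_encode_le)
  moreover have "4 \<le> X"
    using power_mono[of 2 "k + j + 2" 2] by (simp add: X_def)
  then have "4 \<le> real X"
    by simp
  ultimately have "real (2 * prod_encode (k, j)) < real R"
    by argo
  then show ?thesis
    by simp
qed

lemma le_if_weighted_rank:
  assumes h: "mono h" "filterlim h at_top sequentially"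
    and rank: "real (Suc j) * count_weight h m < 1 / real (Suc k)"
  shows "h (2 * prod_encode (k, j)) \<le> m"
proof -
  define w where "w = count_weight h m"
  have "0 < w"
    by (simp add: w_def count_weight_pos)
  have "k + j + 2 \<le> 2 * (Suc k * Suc j)"
    by simp
  then have "real (k + j + 2) * w \<le> 2 * (real (Suc k) * real (Suc j) * w)"
    using \<open>0 < w\<close> by (metis mult.assoc mult_right_mono less_imp_le of_nat_le_iff of_nat_mult
        of_nat_numeral)
  moreover have "real (Suc k) * real (Suc j) * w < 1"
    using rank by (simp add: w_def field_simps)
  ultimately have "real (k + j + 2) * w < 2"
    by linarith
  then have "3 * real (k + j + 2) < 2 * sqrt (real (level_count h m) + 1)"
    by (simp add: w_def count_weight_def field_simps)
  then show ?thesis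
    by (intro le_if_less_level_count[OF h] two_prod_encode_less)
qed

section \<open>Null sets lie in a Yorioka ideal\<close>

lemma weighted_level_set_bound:
  fixes lv :: "'a \<Rightarrow> nat" and w :: "nat \<Rightarrow> real"
  assumes w: "antimono w" "\<And>m. 0 < w m"
    and small: "\<And>T. finite T \<Longrightarrow> T \<subseteq> S \<Longrightarrow> (\<Sum>i\<in>T. w (lv i)) < c"
  shows "finite {i\<in>S. lv i \<le> m}" and "real (card {i\<in>S. lv i \<le> m}) * w m < c"
proof -
  have bound: "real (card T) * w m < c" if "finite T" "T \<subseteq> {i\<in>S. lv i \<le> m}" for T
  proof -
    have "real (card T) * w m = (\<Sum>i\<in>T. w m)"
      by simp
    also have "\<dots> \<le> (\<Sum>i\<in>T. w (lv i))"
      using that(2) by (intro sum_mono antimonoD[OF w(1)]) auto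
    also have "\<dots> < c"
      using that by (intro small) auto
    finally show ?thesis .
  qed
  show finite: "finite {i\<in>S. lv i \<le> m}"
  proof (rule ccontr)
    assume "infinite {i\<in>S. lv i \<le> m}"
    obtain N :: nat where "c / w m < N"
      using reals_Archimedean2 by blast
    then have "c < real N * w m"
      using w(2)[of m] by (simp add: divide_less_eq)
    moreover obtain T where "finite T" "card T = N" "T \<subseteq> {i\<in>S. lv i \<le> m}"
      using infinite_arbitrarily_large[OF \<open>infinite _\<close>] by blast
    ultimately show False
      using bound by fastforce
  qed
  show "real (card {i\<in>S. lv i \<le> m}) * w m < c"
    using bound[OF finite] by blast
qed

lemma exists_weighted_ranking:
  fixes lv :: "'a::linorder \<Rightarrow> nat" and w :: "nat \<Rightarrow> real"
  assumes w: "antimono w" "\<And>m. 0 < w m"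
    and small: "\<And>T. finite T \<Longrightarrow> T \<subseteq> S \<Longrightarrow> (\<Sum>i\<in>T. w (lv i)) < c"
  shows "\<exists>r. inj_on r S \<and> (\<forall>i\<in>S. real (Suc (r i)) * w (lv i) < c)"
proof -
  define precedes where "precedes i' i \<longleftrightarrow> lv i' < lv i \<or> lv i' = lv i \<and> i' < i" for i' i
  define before where "before i = {i'\<in>S. precedes i' i}" for i
  have before_psubset: "before i \<subset> {i'\<in>S. lv i' \<le> lv i}" if "i \<in> S" for i
    using that by (auto simp: before_def precedes_def)
  then have finite_before: "finite (before i)" if "i \<in> S" for i
    using weighted_level_set_bound(1)[OF w small] that by (meson finite_subset psubset_imp_subset)
  have "real (Suc (card (before i))) * w (lv i) < c" if "i \<in> S" for i
  proof -
    have "Suc (card (before i)) \<le> card {i'\<in>S. lv i' \<le> lv i}"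
      using psubset_card_mono[OF weighted_level_set_bound(1)[OF w small] before_psubset[OF that]]
      by simp
    then have "real (Suc (card (before i))) * w (lv i) \<le> real (card {i'\<in>S. lv i' \<le> lv i}) * w (lv i)"
      using w(2) by (intro mult_right_mono) (auto intro: less_imp_le)
    then show ?thesis
      using weighted_level_set_bound(2)[OF w small] by (meson le_less_trans)
  qed
  moreover have "card (before i) < card (before i')"
    if "i \<in> S" "i' \<in> S" "precedes i i'" for i i'
  proof -
    have "insert i (before i) \<subseteq> before i'" "i \<notin> before i"
      using that by (auto simp: before_def precedes_def)
    then show ?thesis
      using finite_before[OF that(1)] finite_before[OF that(2)]
      by (metis card_insert_disjoint card_mono less_eq_Suc_le)
  qed
  then have "inj_on (\<lambda>i. card (before i)) S"
    unfolding precedes_def by (intro inj_onI) (metis less_irrefl linorder_neqE)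
  ultimately show ?thesis
    by blast
qed

lemma J_idealI:
  assumes agree: "\<And>p x y i. x \<in> D p \<Longrightarrow> y \<in> D p \<Longrightarrow> i < h p \<Longrightarrow> x i = y i"
    and often: "\<And>x. x \<in> A \<Longrightarrow> infinite {p. x \<in> D p}"
  shows "A \<in> J_ideal h"
proof -
  define \<sigma> where "\<sigma> p = map (SOME y. y \<in> D p) [0..<h p]" for p
  have "prefix_of (\<sigma> p) x" if "x \<in> D p" for p x
    using agree[OF that someI[of "\<lambda>y. y \<in> D p", OF that]] by (simp add: \<sigma>_def prefix_of_def)
  then have "{p. x \<in> D p} \<subseteq> {p. prefix_of (\<sigma> p) x}" for x
    by blast
  then have "infinite {p. prefix_of (\<sigma> p) x}" if "x \<in> A" for x
    using often[OF that] finite_subset by blast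
  then have "A \<subseteq> inf_often_set \<sigma>"
    unfolding inf_often_set_def Inf_many_def by blast
  moreover have "length (\<sigma> p) = h p" for p
    by (simp add: \<sigma>_def)
  ultimately show ?thesis
    unfolding J_ideal_def by blast
qed

text \<open>Slot \<open>2\<langle>k,j\<rangle>\<close> holds the set of rank \<open>j\<close> of the \<open>k\<close>-th cover; the slots
  \<open>2\<langle>\<langle>k,i\<rangle>,t\<rangle> + 1\<close> repeat each diameter-0 set \<open>C k i\<close> infinitely often.\<close>

definition cover_slots :: "(nat \<Rightarrow> nat \<Rightarrow> cantor set) \<Rightarrow> (nat \<Rightarrow> nat \<Rightarrow> nat) \<Rightarrow> nat \<Rightarrow> cantor set" where
  "cover_slots C r p = (if even p
      then (case prod_decode (p div 2) of (k, j) \<Rightarrow> \<Union>{C k i |i. 0 < cdiam (C k i) \<and> r k i = j})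
      else (case prod_decode (fst (prod_decode (p div 2))) of (k, i) \<Rightarrow>
              if cdiam (C k i) \<le> 0 then C k i else {}))"

lemma cover_slots_agree:
  assumes inj: "\<And>k. inj_on (r k) {i. 0 < cdiam (C k i)}"
    and rank: "\<And>k i. 0 < cdiam (C k i) \<Longrightarrow>
                 h (2 * prod_encode (k, r k i)) \<le> dyadic_level (cdiam (C k i))"
    and xy: "x \<in> cover_slots C r p" "y \<in> cover_slots C r p" and i: "i < h p"
  shows "x i = y i"
proof (cases "even p")
  case True
  obtain k j where kj: "prod_decode (p div 2) = (k, j)"
    by (cases "prod_decode (p div 2)")
  have "p = 2 * (p div 2)"
    using True by simp
  then have p: "p = 2 * prod_encode (k, j)"
    using prod_decode_inverse[of "p div 2"] kj by simp
  obtain a b where a: "x \<in> C k a" "0 < cdiam (C k a)" "r k a = j"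
    and b: "y \<in> C k b" "0 < cdiam (C k b)" "r k b = j"
    using xy True kj by (auto simp: cover_slots_def)
  have "a = b"
    using inj_onD[OF inj, of k a b] a b by simp
  then show ?thesis
    using agree_below_dyadic_level[OF a(1) _ a(2)] b(1) rank[OF a(2)] a(3) p i by simp
next
  case False
  obtain k a where ka: "prod_decode (fst (prod_decode (p div 2))) = (k, a)"
    by (cases "prod_decode (fst (prod_decode (p div 2)))")
  have "x \<in> C k a" "y \<in> C k a" "cdiam (C k a) \<le> 0"
    using xy False ka by (simp_all add: cover_slots_def split: if_splits)
  then show ?thesis
    using cdiam_le_0_imp_eq by blast
qed

lemma infinite_cover_slots:
  assumes cover: "\<And>k. x \<in> (\<Union>i. C k i)"
  shows "infinite {p. x \<in> cover_slots C r p}"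
proof (cases "finite {k. \<exists>i. x \<in> C k i \<and> 0 < cdiam (C k i)}")
  case False
  define K where "K = {k. \<exists>i. x \<in> C k i \<and> 0 < cdiam (C k i)}"
  have "\<forall>k\<in>K. \<exists>i. x \<in> C k i \<and> 0 < cdiam (C k i)"
    by (simp add: K_def)
  then have "\<exists>ik. \<forall>k\<in>K. x \<in> C k (ik k) \<and> 0 < cdiam (C k (ik k))"
    by (rule bchoice)
  then obtain ik where ik: "\<forall>k\<in>K. x \<in> C k (ik k) \<and> 0 < cdiam (C k (ik k))"
    by blast
  define p where "p k = 2 * prod_encode (k, r k (ik k))" for k
  have "x \<in> cover_slots C r (p k)" if "k \<in> K" for k
    using ik that by (auto simp: cover_slots_def p_def)
  then have "p ` K \<subseteq> {p. x \<in> cover_slots C r p}"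
    by blast
  moreover have "inj_on p K"
    by (rule inj_onI) (simp add: p_def)
  then have "infinite (p ` K)"
    using False finite_image_iff unfolding K_def by blast
  ultimately show ?thesis
    using finite_subset by blast
next
  case True
  obtain k where "k \<notin> {k. \<exists>i. x \<in> C k i \<and> 0 < cdiam (C k i)}"
    using ex_new_if_finite[OF infinite_UNIV_nat True] by blast
  moreover obtain i where "x \<in> C k i"
    using cover[of k] by blast
  ultimately have "x \<in> C k i" "cdiam (C k i) \<le> 0"
    by (auto simp: not_less)
  then have "x \<in> cover_slots C r (2 * prod_encode (prod_encode (k, i), t) + 1)" for t
    by (simp add: cover_slots_def)
  then have "range (\<lambda>t. 2 * prod_encode (prod_encode (k, i), t) + 1) \<subseteq> {p. x \<in> cover_slots C r p}"
    by blast
  moreover have "inj (\<lambda>t. 2 * prod_encode (prod_encode (k, i), t) + 1)"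
    by (rule injI) simp
  ultimately show ?thesis
    using range_inj_infinite infinite_super by blast
qed

lemma ranked_covers_J_ideal:
  fixes C :: "nat \<Rightarrow> nat \<Rightarrow> cantor set" and r :: "nat \<Rightarrow> nat \<Rightarrow> nat"
  assumes cover: "\<And>k. A \<subseteq> (\<Union>i. C k i)"
    and inj: "\<And>k. inj_on (r k) {i. 0 < cdiam (C k i)}"
    and rank: "\<And>k i. 0 < cdiam (C k i) \<Longrightarrow>
                 h (2 * prod_encode (k, r k i)) \<le> dyadic_level (cdiam (C k i))"
  shows "A \<in> J_ideal h"
proof (rule J_idealI)
  show "x i = y i" if "x \<in> cover_slots C r p" "y \<in> cover_slots C r p" "i < h p" for p x y i
    using cover_slots_agree[OF inj rank that] .
  show "infinite {p. x \<in> cover_slots C r p}" if "x \<in> A" for x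
    using cover that by (intro infinite_cover_slots) blast
qed

lemma null_f_small_cover:
  assumes "A \<in> null_f f" "0 < e"
  shows "\<exists>C. A \<subseteq> (\<Union>n. C n) \<and> (\<Sum>n. ennreal (f (cdiam (C n)))) < ennreal e"
proof -
  have "hausdorff_delta f 1 A \<le> hausdorff f A"
    unfolding hausdorff_def by (rule SUP_upper) simp
  then have "hausdorff_delta f 1 A < ennreal e"
    using assms by (simp add: null_f_def)
  then show ?thesis
    unfolding hausdorff_delta_def INF_less_iff by blast
qed

lemma null_f_count_gauge_subset_J_ideal:
  assumes h: "mono h" "filterlim h at_top sequentially"
  shows "null_f (count_gauge h) \<subseteq> J_ideal h"
proof
  fix A assume "A \<in> null_f (count_gauge h)"
  then have "\<forall>k. \<exists>C. A \<subseteq> (\<Union>i. C i)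
      \<and> (\<Sum>i. ennreal (count_gauge h (cdiam (C i)))) < ennreal (1 / real (Suc k))"
    using null_f_small_cover by simp
  then have "\<exists>C. \<forall>k. A \<subseteq> (\<Union>i. C k i)
      \<and> (\<Sum>i. ennreal (count_gauge h (cdiam (C k i)))) < ennreal (1 / real (Suc k))"
    by (rule choice)
  then obtain C where cover: "\<And>k. A \<subseteq> (\<Union>i. C k i)"
    and small: "\<And>k. (\<Sum>i. ennreal (count_gauge h (cdiam (C k i)))) < ennreal (1 / real (Suc k))"
    by blast
  define lv where "lv k i = dyadic_level (cdiam (C k i))" for k i
  have "\<exists>r. inj_on r {i. 0 < cdiam (C k i)}
      \<and> (\<forall>i\<in>{i. 0 < cdiam (C k i)}. real (Suc (r i)) * count_weight h (lv k i) < 1 / real (Suc k))"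
    for k
  proof (rule exists_weighted_ranking[OF count_weight_antimono[OF h(2)] count_weight_pos])
    fix T assume T: "finite T" "T \<subseteq> {i. 0 < cdiam (C k i)}"
    have "(\<Sum>i\<in>T. count_weight h (lv k i)) = (\<Sum>i\<in>T. count_gauge h (cdiam (C k i)))"
      using T(2) by (intro sum.cong) (auto simp: count_gauge_def lv_def)
    then have "ennreal (\<Sum>i\<in>T. count_weight h (lv k i)) = (\<Sum>i\<in>T. ennreal (count_gauge h (cdiam (C k i))))"
      by (simp add: sum_ennreal count_gauge_nonneg)
    also have "\<dots> \<le> (\<Sum>i. ennreal (count_gauge h (cdiam (C k i))))"
      by (rule sum_le_suminf) (simp_all add: T(1))
    also have "\<dots> < ennreal (1 / real (Suc k))"
      by (rule small)
    finally show "(\<Sum>i\<in>T. count_weight h (lv k i)) < 1 / real (Suc k)"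
      by (simp add: ennreal_less_iff sum_nonneg less_imp_le[OF count_weight_pos])
  qed
  then have "\<exists>r. \<forall>k. inj_on (r k) {i. 0 < cdiam (C k i)}
      \<and> (\<forall>i\<in>{i. 0 < cdiam (C k i)}. real (Suc (r k i)) * count_weight h (lv k i) < 1 / real (Suc k))"
    by (rule choice[OF allI])
  then obtain r where inj: "\<And>k. inj_on (r k) {i. 0 < cdiam (C k i)}"
    and rank: "\<And>k i. 0 < cdiam (C k i) \<Longrightarrow> real (Suc (r k i)) * count_weight h (lv k i) < 1 / real (Suc k)"
    by blast
  show "A \<in> J_ideal h"
    using cover inj le_if_weighted_rank[OF h rank] unfolding lv_def by (rule ranked_covers_J_ideal)
qed

section \<open>The dominating function \<open>n \<mapsto> g (n\<^sup>n)\<close>\<close>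

lemma self_power_mono: "(a::nat) \<le> b \<Longrightarrow> a ^ a \<le> b ^ b"
proof (cases "a = 0")
  case False
  assume "a \<le> b"
  then have "a ^ a \<le> b ^ a"
    by (rule power_mono) simp
  also have "\<dots> \<le> b ^ b"
    using \<open>a \<le> b\<close> False by (intro power_increasing) auto
  finally show ?thesis .
qed (cases "b = 0", simp_all)

lemma ll_self_power: "mono g \<Longrightarrow> ll g (\<lambda>n. g (n ^ n))"
  unfolding ll_def eventually_sequentially
proof (intro allI exI impI)
  fix k n :: nat assume "mono g" "Suc k \<le> n"
  then have "n ^ k \<le> n ^ n"
    by (intro power_increasing) simp_all
  then show "g (n ^ k) \<le> g (n ^ n)"
    using monoD[OF \<open>mono g\<close>] by blast
qed

lemma mono_self_power_comp: "mono g \<Longrightarrow> mono (\<lambda>n. g (n ^ n))"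
  by (simp add: monoD monoI self_power_mono)

lemma filterlim_self_power_comp:
  fixes g :: "nat \<Rightarrow> nat"
  assumes "strict_mono g"
  shows "filterlim (\<lambda>n. g (n ^ n)) at_top sequentially"
proof -
  have "n \<le> g (n ^ n)" for n
    using strict_mono_imp_increasing[OF assms, of "n ^ n"] self_le_power[of n n] by (cases n) auto
  then show ?thesis
    by (intro filterlim_at_top_mono[OF filterlim_ident] always_eventually) simp
qed

theorem corollary3p6:
  shows "(\<forall>f. gauge f \<longrightarrow> (\<exists>g. strict_mono g \<and> yorioka g \<subseteq> null_f f))
       \<and> (\<forall>g. strict_mono g \<longrightarrow> (\<exists>f. gauge f \<and> null_f f \<subseteq> yorioka g))"
proof (intro conjI allI impI)
  fix f :: "real \<Rightarrow> real" assume f: "gauge f"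
  then obtain g where "strict_mono g" "\<And>n. f ((1/2) ^ g n) \<le> (1/2) ^ n"
    using gauge_dyadic_modulus by blast
  then show "\<exists>g. strict_mono g \<and> yorioka g \<subseteq> null_f f"
    using yorioka_subset_null_f[OF f] by blast
next
  fix g :: "nat \<Rightarrow> nat" assume g: "strict_mono g"
  let ?h = "\<lambda>n. g (n ^ n)"
  have h: "mono ?h" "filterlim ?h at_top sequentially"
    using mono_self_power_comp[OF strict_mono_mono[OF g]] filterlim_self_power_comp[OF g] .
  have "null_f (count_gauge ?h) \<subseteq> J_ideal ?h"
    by (rule null_f_count_gauge_subset_J_ideal[OF h])
  also have "\<dots> \<subseteq> yorioka g"
    using ll_self_power[OF strict_mono_mono[OF g]] unfolding yorioka_def by blast
  finally show "\<exists>f. gauge f \<and> null_f f \<subseteq> yorioka g"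
    using gauge_count_gauge[OF h] by blast
qed

end
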